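(* Let $E_{-2}\xrightarrow{\pi}E_{-1}\xrightarrow{\pi}E_0$ be a $3$-term complex of vector bundles over $M$, denoted $\mathcal E$. Then $(\mathrm{End}^{-2}(\mathcal E),\mathrm{End}^{-1}(\mathcal E),\mathfrak D_\pi(\mathcal E),\mathfrak p,\mathrm d,[\cdot,\cdot]_C)$ is a strict Lie $3$-algebroid (with $\mathfrak D_\pi(\mathcal E)$ in degree $0$, $\mathrm{End}^{-1}(\mathcal E)$ in degree $-1$, $\mathrm{End}^{-2}(\mathcal E)$ in degree $-2$, anchor $\mathfrak p$, $l_1=\mathrm d$, $l_2=[\cdot,\cdot]_C$, $l_3=l_4=0$).
   Context: $\mathfrak D(\mathcal E)$ is the vector bundle whose sections are triples $\mathfrak d=(\mathfrak d_0,\mathfrak d_1,\mathfrak d_2)$ of $\mathbb R$-linear maps $\mathfrak d_i:\Gamma(E_{-i})\to\Gamma(E_{-i})$ for which there is a vector field $X$ with $\mathfrak d_i(fe^i)=f\mathfrak d_i(e^i)+X(f)e^i$ for all $f\in C^\infty(M)$, $e^i\in\Gamma(E_{-i})$; $\mathfrak p(\mathfrak d)=X$. $\mathfrak D_\pi(\mathcal E)\subset\mathfrak D(\mathcal E)$ is the subbundle of those $\mathfrak d$ with $\mathfrak d_0\circ\pi=\pi\circ\mathfrak d_1$ and $\mathfrak d_1\circ\pi=\pi\circ\mathfrak d_2$. $\mathrm{End}^{-1}(\mathcal E)=\mathrm{Hom}(E_0,E_{-1})\oplus\mathrm{Hom}(E_{-1},E_{-2})$, $\mathrm{End}^{-2}(\mathcal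 E)=\mathrm{Hom}(E_0,E_{-2})$. The differential: $\mathrm d(\theta^2)=\pi\circ\theta^2-\theta^2\circ\pi$ for $\theta^2\in\Gamma(\mathrm{Hom}(E_0,E_{-2}))$, and $\mathrm d(\theta^1)=\pi\circ\theta^1+\theta^1\circ\pi$ for $\theta^1\in\Gamma(\mathrm{End}^{-1}(\mathcal E))$ (all compositions taken componentwise, meaningful ones only). The bracket: $[\mathfrak d,\mathfrak t]_C=\mathfrak d\circ\mathfrak t-\mathfrak t\circ\mathfrak d$, $[\mathfrak d,\theta^i]_C=\mathfrak d\circ\theta^i-\theta^i\circ\mathfrak d$ for $\theta^i\in\Gamma(\mathrm{End}^{-i}(\mathcal E))$, $[\theta^1,\vartheta^1]_C=\theta^1\circ\vartheta^1+\vartheta^1\circ\theta^1$, extended by graded skew-symmetry, all other brackets zero. Split Lie $n$-algebroid: a graded vector bundle $\mathcal A=A_0\oplus\cdots\oplus A_{-n+1}$ ($A_{-i}$ in degree $-i$) with anchor $a:A_0\to TM$ and graded skew-symmetric brackets $l_i:\Gamma(\wedge^i\mathcal A)\to\Gamma(\mathcal A)$ of degree $2-i$, $1\le i\le n+1$, such that $\sum_{i+j=k+1}(-1)^{i(j-1)}\sum_{\sigma\in Sh^{-1}_{i,k-i}}\mathrm{sgn}(\sigma)\epsilon(\sigma)l_j(l_i(X_{\sigma(1)},\dots,X_{\sigma(i)}),X_{\sigma(i+1)},\dots,X_{\sigma(k)})=0$ for all $k$ (unshuffles, Koszul sign $\epsilon$), $l_2(X^0,fX)=fl_2(X^0,X)+a(X^0)(f)X$,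 and $l_i$ is $C^\infty(M)$-linear for $i\ne2$. A strict Lie $3$-algebroid is a Lie $3$-algebroid with $l_3=l_4=0$. *)

theory Defs
  imports Complex_Main "HOL-Combinatorics.Permutations" "HOL-Library.Function_Algebras"
    "HOL-Library.Product_Plus"
begin

(* ===== Algebraic model of sections =====
   'r  : the commutative R-algebra C^\<infinity>(M) of smooth functions
   a C^\<infinity>(M)-module (space of sections) is an abelian group 'e with an action sm.
   Vector fields = R-linear derivations of C^\<infinity>(M). *)

definition is_module :: "('r::comm_ring_1 \<Rightarrow> 'e::ab_group_add \<Rightarrow> 'e) \<Rightarrow> bool" where
  "is_module sm \<longleftrightarrow>
     (\<forall>f g e. sm (f + g) e = sm f e + sm g e) \<and>
     (\<forall>f e e'. sm f (e + e') = sm f e + sm f e') \<and>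
     (\<forall>f g e. sm (f * g) e = sm f (sm g e)) \<and>
     (\<forall>e. sm 1 e = e)"

(* C^\<infinity>(M)-linear maps of sections = sections of Hom bundles / bundle maps *)
definition module_hom :: "('r::comm_ring_1 \<Rightarrow> 'e::ab_group_add \<Rightarrow> 'e) \<Rightarrow>
    ('r \<Rightarrow> 'e'::ab_group_add \<Rightarrow> 'e') \<Rightarrow> ('e \<Rightarrow> 'e') \<Rightarrow> bool" where
  "module_hom sm sm' \<phi> \<longleftrightarrow> (\<forall>x y. \<phi> (x + y) = \<phi> x + \<phi> y) \<and> (\<forall>f x. \<phi> (sm f x) = sm' f (\<phi> x))"

definition is_vector_field :: "('r::{comm_ring_1,real_algebra_1} \<Rightarrow> 'r) \<Rightarrow> bool" where
  "is_vector_field X \<longleftrightarrow>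
     (\<forall>f g. X (f + g) = X f + X g) \<and>
     (\<forall>c f. X (of_real c * f) = of_real c * X f) \<and>
     (\<forall>f g. X (f * g) = f * X g + X f * g)"

definition is_der_op :: "('r::{comm_ring_1,real_algebra_1} \<Rightarrow> 'e::ab_group_add \<Rightarrow> 'e) \<Rightarrow>
    ('r \<Rightarrow> 'r) \<Rightarrow> ('e \<Rightarrow> 'e) \<Rightarrow> bool" where
  "is_der_op sm X d \<longleftrightarrow>
     (\<forall>x y. d (x + y) = d x + d y) \<and>
     (\<forall>c x. d (sm (of_real c) x) = sm (of_real c) (d x)) \<and>
     (\<forall>f x. d (sm f x) = sm f (d x) + sm (X f) x)"

(* ===== Generic split Lie n-algebroid (on sections) =====
   sm : C^\<infinity>(M)-action on \<Gamma>(A);  G i = \<Gamma>(A_{-i}) inside \<Gamma>(A);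
   a  : anchor (\<Gamma>(A_0) \<rightarrow> vector fields);  l i : the i-ary bracket, on lists of length i. *)

definition pm :: "int \<Rightarrow> 'a::ab_group_add \<Rightarrow> 'a" where
  "pm s x = (if 0 \<le> s then x else - x)"

definition sections :: "nat \<Rightarrow> (nat \<Rightarrow> 'a::ab_group_add set) \<Rightarrow> 'a set" where
  "sections n G = {(\<Sum>i<n. xs i) | xs. \<forall>i<n. xs i \<in> G i}"

definition homog :: "(nat \<Rightarrow> 'a set) \<Rightarrow> 'a list \<Rightarrow> nat list \<Rightarrow> bool" where
  "homog G xs ds \<longleftrightarrow> length ds = length xs \<and> (\<forall>j<length xs. xs ! j \<in> G (ds ! j))"

definition permute_list_by :: "(nat \<Rightarrow> nat) \<Rightarrow> 'a list \<Rightarrow> 'a list" where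
  "permute_list_by \<sigma> xs = map (\<lambda>p. xs ! \<sigma> p) [0..<length xs]"

(* (i, k-i)-unshuffles, 0-indexed *)
definition unshuffles :: "nat \<Rightarrow> nat \<Rightarrow> (nat \<Rightarrow> nat) set" where
  "unshuffles i k = {\<sigma>. \<sigma> permutes {..<k} \<and>
      (\<forall>p q. p < q \<and> q < i \<longrightarrow> \<sigma> p < \<sigma> q) \<and>
      (\<forall>p q. i \<le> p \<and> p < q \<and> q < k \<longrightarrow> \<sigma> p < \<sigma> q)}"

(* Koszul sign of \<sigma> for elements of degrees -(ds!j):
   X_\<sigma>(1) ... X_\<sigma>(k) = koszul ds \<sigma> * X_1 ... X_k in the graded symmetric algebra *)
definition koszul :: "nat list \<Rightarrow> (nat \<Rightarrow> nat) \<Rightarrow> int" where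
  "koszul ds \<sigma> = (\<Prod>(p, q) \<in> {(p, q). p < q \<and> q < length ds \<and> \<sigma> q < \<sigma> p}.
                     (-1) ^ (ds ! \<sigma> p * ds ! \<sigma> q))"

definition jacobiator :: "nat \<Rightarrow> (nat \<Rightarrow> 'a list \<Rightarrow> 'a::ab_group_add) \<Rightarrow> 'a list \<Rightarrow> nat list \<Rightarrow> 'a" where
  "jacobiator n l xs ds =
    (let k = length xs in
     \<Sum>i \<in> {i. 1 \<le> i \<and> i \<le> k \<and> i \<le> n + 1 \<and> k + 1 - i \<le> n + 1}.
       \<Sum>\<sigma> \<in> unshuffles i k.
         (let ys = permute_list_by \<sigma> xs in
          pm ((-1) ^ (i * (k - i)) * sign \<sigma> * koszul ds \<sigma>)
             (l (k + 1 - i) (l i (take i ys) # drop i ys))))"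

definition split_lie_n_algebroid :: "nat \<Rightarrow> ('r::{comm_ring_1,real_algebra_1} \<Rightarrow> 'a::ab_group_add \<Rightarrow> 'a) \<Rightarrow>
    (nat \<Rightarrow> 'a set) \<Rightarrow> ('a \<Rightarrow> 'r \<Rightarrow> 'r) \<Rightarrow> (nat \<Rightarrow> 'a list \<Rightarrow> 'a) \<Rightarrow> bool" where
  "split_lie_n_algebroid n sm G a l \<longleftrightarrow>
     \<comment> \<open>graded module \<Gamma>(A) = \<Gamma>(A_0) + ... + \<Gamma>(A_{-n+1}) (direct sum)\<close>
     is_module sm \<and>
     (\<forall>i. 0 \<in> G i \<and> (\<forall>x\<in>G i. \<forall>y\<in>G i. x + y \<in> G i) \<and> (\<forall>f. \<forall>x\<in>G i. sm f x \<in> G i)) \<and>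
     (\<forall>i\<ge>n. G i = {0}) \<and>
     (\<forall>xs. (\<forall>i<n. xs i \<in> G i) \<and> (\<Sum>i<n. xs i) = 0 \<longrightarrow> (\<forall>i<n. xs i = 0)) \<and>
     \<comment> \<open>anchor: a bundle map A_0 \<rightarrow> TM\<close>
     (\<forall>x\<in>G 0. is_vector_field (a x)) \<and>
     (\<forall>x\<in>G 0. \<forall>y\<in>G 0. a (x + y) = (\<lambda>f. a x f + a y f)) \<and>
     (\<forall>g. \<forall>x\<in>G 0. a (sm g x) = (\<lambda>f. g * a x f)) \<and>
     \<comment> \<open>brackets l_i, 1 \<le> i \<le> n+1: R-multilinear on \<Gamma>(\<wedge>^i A), C^\<infinity>-linear for i \<noteq> 2\<close>
     (\<forall>i\<in>{1..n+1}. \<forall>xs. length xs = i \<and> set xs \<subseteq> sections n G \<longrightarrow>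
        l i xs \<in> sections n G \<and>
        (\<forall>p<i. \<forall>y\<in>sections n G. l i (xs[p := xs ! p + y]) = l i xs + l i (xs[p := y])) \<and>
        (\<forall>p<i. \<forall>c. l i (xs[p := sm (of_real c) (xs ! p)]) = sm (of_real c) (l i xs)) \<and>
        (i \<noteq> 2 \<longrightarrow> (\<forall>p<i. \<forall>f. l i (xs[p := sm f (xs ! p)]) = sm f (l i xs)))) \<and>
     \<comment> \<open>l_i has degree 2 - i\<close>
     (\<forall>i\<in>{1..n+1}. \<forall>xs ds. homog G xs ds \<and> length xs = i \<longrightarrow>
        (if 2 \<le> sum_list ds + i \<and> sum_list ds + i - 2 < n
         then l i xs \<in> G (sum_list ds + i - 2) else l i xs = 0)) \<and>
     \<comment> \<open>graded skew-symmetry\<close>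
     (\<forall>i\<in>{1..n+1}. \<forall>xs ds \<sigma>. homog G xs ds \<and> length xs = i \<and> \<sigma> permutes {..<i} \<longrightarrow>
        l i (permute_list_by \<sigma> xs) = pm (sign \<sigma> * koszul ds \<sigma>) (l i xs)) \<and>
     \<comment> \<open>higher Jacobi identities, for all k\<close>
     (\<forall>xs ds. homog G xs ds \<and> length xs \<ge> 1 \<longrightarrow> jacobiator n l xs ds = 0) \<and>
     \<comment> \<open>Leibniz rule\<close>
     (\<forall>x\<in>G 0. \<forall>y\<in>sections n G. \<forall>f. l 2 [x, sm f y] = sm f (l 2 [x, y]) + sm (a x f) y)"

definition strict_lie_3_algebroid :: "('r::{comm_ring_1,real_algebra_1} \<Rightarrow> 'a::ab_group_add \<Rightarrow> 'a) \<Rightarrow>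
    (nat \<Rightarrow> 'a set) \<Rightarrow> ('a \<Rightarrow> 'r \<Rightarrow> 'r) \<Rightarrow> (nat \<Rightarrow> 'a list \<Rightarrow> 'a) \<Rightarrow> bool" where
  "strict_lie_3_algebroid sm G a l \<longleftrightarrow>
     split_lie_n_algebroid 3 sm G a l \<and>
     (\<forall>xs. set xs \<subseteq> sections 3 G \<longrightarrow> l 3 xs = 0 \<and> l 4 xs = 0)"

definition complex3 :: "('r::{comm_ring_1,real_algebra_1} \<Rightarrow> 'e0::ab_group_add \<Rightarrow> 'e0) \<Rightarrow>
    ('r \<Rightarrow> 'e1::ab_group_add \<Rightarrow> 'e1) \<Rightarrow> ('r \<Rightarrow> 'e2::ab_group_add \<Rightarrow> 'e2) \<Rightarrow>
    ('e1 \<Rightarrow> 'e0) \<Rightarrow> ('e2 \<Rightarrow> 'e1) \<Rightarrow> bool" where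
  "complex3 sm0 sm1 sm2 p1 p2 \<longleftrightarrow>
     is_module sm0 \<and> is_module sm1 \<and> is_module sm2 \<and>
     module_hom sm1 sm0 p1 \<and> module_hom sm2 sm1 p2 \<and> (\<forall>e. p1 (p2 e) = 0)"

(* \<Gamma>(D \<oplus> End^{-1} \<oplus> End^{-2}); an element of \<Gamma>(D) is (X, d0, d1, d2) with X = \<pp>(d) *)
type_synonym ('r, 'e0, 'e1, 'e2) ends =
  "(('r \<Rightarrow> 'r) \<times> ('e0 \<Rightarrow> 'e0) \<times> ('e1 \<Rightarrow> 'e1) \<times> ('e2 \<Rightarrow> 'e2))
   \<times> (('e0 \<Rightarrow> 'e1) \<times> ('e1 \<Rightarrow> 'e2)) \<times> ('e0 \<Rightarrow> 'e2)"

definition Dpi :: "('r::{comm_ring_1,real_algebra_1} \<Rightarrow> 'e0::ab_group_add \<Rightarrow> 'e0) \<Rightarrow>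
    ('r \<Rightarrow> 'e1::ab_group_add \<Rightarrow> 'e1) \<Rightarrow> ('r \<Rightarrow> 'e2::ab_group_add \<Rightarrow> 'e2) \<Rightarrow>
    ('e1 \<Rightarrow> 'e0) \<Rightarrow> ('e2 \<Rightarrow> 'e1) \<Rightarrow>
    (('r \<Rightarrow> 'r) \<times> ('e0 \<Rightarrow> 'e0) \<times> ('e1 \<Rightarrow> 'e1) \<times> ('e2 \<Rightarrow> 'e2)) set" where
  "Dpi sm0 sm1 sm2 p1 p2 = {(X, d0, d1, d2). is_vector_field X \<and>
      is_der_op sm0 X d0 \<and> is_der_op sm1 X d1 \<and> is_der_op sm2 X d2 \<and>
      (\<forall>e. d0 (p1 e) = p1 (d1 e)) \<and> (\<forall>e. d1 (p2 e) = p2 (d2 e))}"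

definition GE :: "('r::{comm_ring_1,real_algebra_1} \<Rightarrow> 'e0::ab_group_add \<Rightarrow> 'e0) \<Rightarrow>
    ('r \<Rightarrow> 'e1::ab_group_add \<Rightarrow> 'e1) \<Rightarrow> ('r \<Rightarrow> 'e2::ab_group_add \<Rightarrow> 'e2) \<Rightarrow>
    ('e1 \<Rightarrow> 'e0) \<Rightarrow> ('e2 \<Rightarrow> 'e1) \<Rightarrow> nat \<Rightarrow> ('r, 'e0, 'e1, 'e2) ends set" where
  "GE sm0 sm1 sm2 p1 p2 i =
     (if i = 0 then {(D, 0, 0) | D. D \<in> Dpi sm0 sm1 sm2 p1 p2}
      else if i = 1 then {(0, (ta, tb), 0) | ta tb. module_hom sm0 sm1 ta \<and> module_hom sm1 sm2 tb}
      else if i = 2 then {(0, 0, t) | t. module_hom sm0 sm2 t}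
      else {0})"

definition smE :: "('r::{comm_ring_1,real_algebra_1} \<Rightarrow> 'e0::ab_group_add \<Rightarrow> 'e0) \<Rightarrow>
    ('r \<Rightarrow> 'e1::ab_group_add \<Rightarrow> 'e1) \<Rightarrow> ('r \<Rightarrow> 'e2::ab_group_add \<Rightarrow> 'e2) \<Rightarrow>
    'r \<Rightarrow> ('r, 'e0, 'e1, 'e2) ends \<Rightarrow> ('r, 'e0, 'e1, 'e2) ends" where
  "smE sm0 sm1 sm2 f x =
     (case x of ((X, d0, d1, d2), (ta, tb), t) \<Rightarrow>
       ((\<lambda>g. f * X g, \<lambda>e. sm0 f (d0 e), \<lambda>e. sm1 f (d1 e), \<lambda>e. sm2 f (d2 e)),
        (\<lambda>e. sm1 f (ta e), \<lambda>e. sm2 f (tb e)), \<lambda>e. sm2 f (t e)))"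

definition anchorE :: "('r, 'e0, 'e1, 'e2) ends \<Rightarrow> 'r \<Rightarrow> 'r" where
  "anchorE x = fst (fst x)"

(* l_1 = d, extended additively: d(\<theta>^2) = \<pi>\<theta>^2 - \<theta>^2\<pi>, d(\<theta>^1) = \<pi>\<theta>^1 + \<theta>^1\<pi>, d = 0 on D_\<pi> *)
definition dE :: "('e1::ab_group_add \<Rightarrow> 'e0::ab_group_add) \<Rightarrow> ('e2::ab_group_add \<Rightarrow> 'e1) \<Rightarrow>
    ('r::ab_group_add, 'e0, 'e1, 'e2) ends \<Rightarrow> ('r, 'e0, 'e1, 'e2) ends" where
  "dE p1 p2 x =
     (case x of (_, (ta, tb), t) \<Rightarrow>
       ((0, \<lambda>e. p1 (ta e), \<lambda>e. ta (p1 e) + p2 (tb e), \<lambda>e. tb (p2 e)),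
        (\<lambda>e. p2 (t e), \<lambda>e. - t (p1 e)), 0))"

definition bracketE :: "('r::ab_group_add, 'e0::ab_group_add, 'e1::ab_group_add, 'e2::ab_group_add) ends \<Rightarrow>
    ('r, 'e0, 'e1, 'e2) ends \<Rightarrow> ('r, 'e0, 'e1, 'e2) ends" where
  "bracketE x y =
     (case x of ((X, d0, d1, d2), (ta, tb), t) \<Rightarrow>
      case y of ((X', d0', d1', d2'), (ta', tb'), t') \<Rightarrow>
       ((\<lambda>f. X (X' f) - X' (X f), \<lambda>e. d0 (d0' e) - d0' (d0 e),
         \<lambda>e. d1 (d1' e) - d1' (d1 e), \<lambda>e. d2 (d2' e) - d2' (d2 e)),
        (\<lambda>e. (d1 (ta' e) - ta' (d0 e)) - (d1' (ta e) - ta (d0' e)),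
         \<lambda>e. (d2 (tb' e) - tb' (d1 e)) - (d2' (tb e) - tb (d1' e))),
        \<lambda>e. (d2 (t' e) - t' (d0 e)) - (d2' (t e) - t (d0' e))
             + (tb (ta' e) + tb' (ta e))))"

definition lE :: "('e1::ab_group_add \<Rightarrow> 'e0::ab_group_add) \<Rightarrow> ('e2::ab_group_add \<Rightarrow> 'e1) \<Rightarrow>
    nat \<Rightarrow> ('r::ab_group_add, 'e0, 'e1, 'e2) ends list \<Rightarrow> ('r, 'e0, 'e1, 'e2) ends" where
  "lE p1 p2 i xs =
     (if i = 1 then dE p1 p2 (xs ! 0) else if i = 2 then bracketE (xs ! 0) (xs ! 1) else 0)"

end

theory Submission
  imports Defs
begin

text \<open>
  All the axioms are identities between compositions of maps, checked componentwise.
  The bracket is the graded commutator of the pieces \<open>(X, d\<^sub>0, d\<^sub>1, d\<^sub>2)\<close>,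
  \<open>\<theta>\<^sup>1\<close>, \<open>\<theta>\<^sup>2\<close>, and \<open>d\<close> is the graded commutator with \<open>\<pi>\<close>.
  Commutators of derivative endomorphisms are derivative endomorphisms over the commutator of
  their vector fields, and commutators of a derivative endomorphism with a bundle map are bundle
  maps, so brackets of sections are sections; the Leibniz rules come from those of the
  \<open>d\<^sub>i\<close>. Since \<open>\<pi> \<circ> \<pi> = 0\<close>, \<open>d\<close> squares to zero, and graded skew-symmetry,
  the derivation property of \<open>d\<close> and the graded Jacobi identity are verified on homogeneous
  elements degree by degree. As \<open>l\<^sub>i = 0\<close> for \<open>i \<ge> 3\<close>, every term
  \<open>l\<^bsub>k+1-i\<^esub>(l\<^sub>i(\<dots>), \<dots>)\<close> of a Jacobiator with \<open>k \<ge> 4\<close> arguments has a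
  vanishing inner or outer bracket.
\<close>

section \<open>Modules, vector fields and derivative endomorphisms\<close>

lemma is_module_iff_module: "is_module sm \<longleftrightarrow> module sm"
  by (auto simp: is_module_def module_def)

lemma additive_if_module_hom: "module_hom sm sm' \<phi> \<Longrightarrow> additive \<phi>"
  by (simp add: module_hom_def additive_def)

lemma additive_if_der_op: "is_der_op sm X d \<Longrightarrow> additive d"
  by (simp add: is_der_op_def additive_def)

lemma additive_if_vector_field: "is_vector_field X \<Longrightarrow> additive X"
  by (simp add: is_vector_field_def additive_def)

lemma additive_simps:
  assumes "additive f"
  shows "f (x + y) = f x + f y" "f 0 = 0" "f (- x) = - f x" "f (x - y) = f x - f y"
  using additive.add additive.zero additive.minus additive.diff assms by blast+

lemma vector_field_of_real:
  assumes "is_vector_field X"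
  shows "X (of_real c) = 0"
proof -
  have "X (1 * 1) = 1 * X 1 + X 1 * 1"
    using assms unfolding is_vector_field_def by blast
  then have "X 1 = 0" by simp
  moreover have "X (of_real c * 1) = of_real c * X 1"
    using assms unfolding is_vector_field_def by blast
  ultimately show ?thesis by simp
qed

lemma vector_field_mult:
  assumes "is_vector_field X"
  shows "X (f * g) = f * X g + X f * g"
  using assms unfolding is_vector_field_def by blast

lemma der_op_scale_simp:
  assumes "is_der_op sm X d"
  shows "d (sm f x) = sm f (d x) + sm (X f) x"
  using assms unfolding is_der_op_def by blast

lemma module_hom_scale_simp: "module_hom sm sm' \<phi> \<Longrightarrow> \<phi> (sm f x) = sm' f (\<phi> x)"
  unfolding module_hom_def by blast

lemma module_hom_comp:
  "module_hom s1 s2 f \<Longrightarrow> module_hom s2 s3 g \<Longrightarrow> module_hom s1 s3 (\<lambda>e. g (f e))"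
  by (simp add: module_hom_def)

lemma module_hom_zero: "module s' \<Longrightarrow> module_hom s s' 0"
  by (simp add: module_hom_def module.scale_zero_right)

lemma module_hom_add:
  "module s' \<Longrightarrow> module_hom s s' f \<Longrightarrow> module_hom s s' g \<Longrightarrow> module_hom s s' (\<lambda>e. f e + g e)"
  by (simp add: module_hom_def module.scale_right_distrib algebra_simps)

lemma module_hom_plus:
  "module s' \<Longrightarrow> module_hom s s' f \<Longrightarrow> module_hom s s' g \<Longrightarrow> module_hom s s' (f + g)"
  unfolding plus_fun_def by (rule module_hom_add)

lemma module_hom_diff:
  "module s' \<Longrightarrow> module_hom s s' f \<Longrightarrow> module_hom s s' g \<Longrightarrow> module_hom s s' (\<lambda>e. f e - g e)"
  by (simp add: module_hom_def module.scale_right_diff_distrib algebra_simps)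

lemma module_hom_uminus: "module s' \<Longrightarrow> module_hom s s' f \<Longrightarrow> module_hom s s' (\<lambda>e. - f e)"
  by (simp add: module_hom_def module.scale_minus_right)

lemma module_hom_scale:
  "module s' \<Longrightarrow> module_hom s s' f \<Longrightarrow> module_hom s s' (\<lambda>e. s' g (f e))"
  by (simp add: module_hom_def module.scale_right_distrib module.scale_left_commute)

lemma module_hom_der_op_commutator:
  assumes "module s'" "module_hom s s' \<theta>" "is_der_op s X d" "is_der_op s' X d'"
  shows "module_hom s s' (\<lambda>e. d' (\<theta> e) - \<theta> (d e))"
  using assms(2) additive_simps[OF additive_if_der_op[OF assms(3)]]
    additive_simps[OF additive_if_der_op[OF assms(4)]]
    additive_simps[OF additive_if_module_hom[OF assms(2)]]
  unfolding module_hom_def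
  by (simp add: der_op_scale_simp[OF assms(3)] der_op_scale_simp[OF assms(4)]
      module.scale_right_diff_distrib[OF assms(1)] algebra_simps)

lemma der_op_if_module_hom: "module s \<Longrightarrow> module_hom s s \<phi> \<Longrightarrow> is_der_op s 0 \<phi>"
  by (simp add: is_der_op_def module_hom_def module.scale_zero_left)

lemma vector_field_zero: "is_vector_field 0"
  by (simp add: is_vector_field_def)

lemma vector_field_add:
  assumes "is_vector_field X" "is_vector_field Y"
  shows "is_vector_field (X + Y)"
  using assms vector_field_of_real[OF assms(1)] vector_field_of_real[OF assms(2)]
  unfolding is_vector_field_def by (simp add: algebra_simps)

lemma vector_field_commutator:
  assumes "is_vector_field X" "is_vector_field Y"
  shows "is_vector_field (\<lambda>f. X (Y f) - Y (X f))"
  using additive_simps[OF additive_if_vector_field[OF assms(1)]]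
    additive_simps[OF additive_if_vector_field[OF assms(2)]]
  unfolding is_vector_field_def
  by (simp add: vector_field_mult[OF assms(1)] vector_field_mult[OF assms(2)]
      vector_field_of_real[OF assms(1)] vector_field_of_real[OF assms(2)] algebra_simps)

lemma vector_field_scale:
  assumes "is_vector_field X"
  shows "is_vector_field (\<lambda>g. f * X g)"
  using assms vector_field_of_real[OF assms] unfolding is_vector_field_def
  by (simp add: algebra_simps)

lemma der_op_add:
  assumes "module s" "is_vector_field X" "is_vector_field Y" "is_der_op s X d" "is_der_op s Y d'"
  shows "is_der_op s (X + Y) (d + d')"
  using assms(2-5) vector_field_of_real[OF assms(2)] vector_field_of_real[OF assms(3)]
  unfolding is_der_op_def
  by (simp add: module.scale_right_distrib[OF assms(1)] module.scale_left_distrib[OF assms(1)]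
      module.scale_zero_left[OF assms(1)] algebra_simps)

lemma der_op_commutator:
  assumes "module s" "is_vector_field X" "is_vector_field Y" "is_der_op s X d" "is_der_op s Y d'"
  shows "is_der_op s (\<lambda>f. X (Y f) - Y (X f)) (\<lambda>x. d (d' x) - d' (d x))"
  using additive_simps[OF additive_if_der_op[OF assms(4)]]
    additive_simps[OF additive_if_der_op[OF assms(5)]]
    additive_simps[OF additive_if_vector_field[OF assms(2)]]
    additive_simps[OF additive_if_vector_field[OF assms(3)]]
  unfolding is_der_op_def
  by (simp add: der_op_scale_simp[OF assms(4)] der_op_scale_simp[OF assms(5)]
      vector_field_of_real[OF assms(2)] vector_field_of_real[OF assms(3)]
      module.scale_right_distrib[OF assms(1)] module.scale_left_distrib[OF assms(1)]
      module.scale_right_diff_distrib[OF assms(1)] module.scale_left_diff_distrib[OF assms(1)]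
      algebra_simps)

lemma der_op_scale:
  assumes "module s" "is_vector_field X" "is_der_op s X d"
  shows "is_der_op s (\<lambda>g. f * X g) (\<lambda>e. s f (d e))"
  using assms(3) unfolding is_der_op_def
  by (simp add: module.scale_right_distrib[OF assms(1)] module.scale_left_commute[OF assms(1)]
      module.scale_scale[OF assms(1)] module.scale_zero_left[OF assms(1)]
      vector_field_of_real[OF assms(2)] algebra_simps)

section \<open>Unshuffles and Jacobiators of short lists\<close>

lemma permutes_lessThan_eqI:
  assumes "\<sigma> permutes {..<n::nat}" "\<tau> permutes {..<n}" "\<And>p. p < n \<Longrightarrow> \<sigma> p = \<tau> p"
  shows "\<sigma> = \<tau>"
proof
  fix p show "\<sigma> p = \<tau> p"
    using assms permutes_not_in[OF assms(1)] permutes_not_in[OF assms(2)] by (cases "p < n") auto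
qed

lemma permutes_lessThan_1: "\<sigma> permutes {..<1::nat} \<longleftrightarrow> \<sigma> = id"
  by (simp add: lessThan_Suc)

lemma permutes_lessThan_2: "\<sigma> permutes {..<2::nat} \<longleftrightarrow> \<sigma> = id \<or> \<sigma> = transpose 0 1"
proof -
  have "{..<2::nat} = {0, 1}" by auto
  then show ?thesis by (simp add: permutes_doubleton_iff)
qed

definition cycle3 :: "nat \<Rightarrow> nat" where
  "cycle3 = transpose 0 1 \<circ> transpose 1 2"

lemma cycle3_simps [simp]: "cycle3 0 = 1" "cycle3 (Suc 0) = 2" "cycle3 2 = 0"
  by (simp_all add: cycle3_def)

lemma cycle3_permutes: "cycle3 permutes {..<3}"
  unfolding cycle3_def by (intro permutes_compose permutes_swap_id) auto

lemma unshuffles_1_1: "unshuffles 1 1 = {id}"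
  unfolding unshuffles_def permutes_lessThan_1 by auto

lemma unshuffles_1_2: "unshuffles 1 2 = {id, transpose 0 1}"
  by (auto simp: unshuffles_def permutes_lessThan_2)

lemma unshuffles_2_2: "unshuffles 2 2 = {id}"
  unfolding unshuffles_def permutes_lessThan_2 by (force simp: transpose_def)

lemma less_3_iff: "p < 3 \<longleftrightarrow> p = 0 \<or> p = 1 \<or> p = 2" for p :: nat
  by auto

lemma unshuffles_2_3_iff: "\<sigma> \<in> unshuffles 2 3 \<longleftrightarrow> \<sigma> permutes {..<3} \<and> \<sigma> 0 < \<sigma> 1"
proof -
  have "p < q \<and> q < 2 \<longleftrightarrow> p = 0 \<and> q = 1" "\<not> (2 \<le> p \<and> p < q \<and> q < 3)" for p q :: nat
    by auto
  then show ?thesis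
    unfolding unshuffles_def by simp
qed

lemma unshuffles_2_3: "unshuffles 2 3 = {id, transpose 1 2, cycle3}"
proof (intro equalityI subsetI)
  fix \<sigma> assume "\<sigma> \<in> unshuffles 2 3"
  then have \<sigma>: "\<sigma> permutes {..<3}" and "\<sigma> 0 < \<sigma> 1"
    by (simp_all add: unshuffles_2_3_iff)
  moreover have "\<sigma> 0 < 3" "\<sigma> 1 < 3" "\<sigma> 2 < 3"
    using permutes_in_image[OF \<sigma>] by auto
  moreover have "\<sigma> 0 \<noteq> \<sigma> 2" "\<sigma> 1 \<noteq> \<sigma> 2"
    using permutes_inj[OF \<sigma>] by (simp_all add: inj_eq)
  ultimately consider "\<sigma> 0 = 0" "\<sigma> 1 = 1" "\<sigma> 2 = 2" | "\<sigma> 0 = 0" "\<sigma> 1 = 2" "\<sigma> 2 = 1"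
    | "\<sigma> 0 = 1" "\<sigma> 1 = 2" "\<sigma> 2 = 0"
    unfolding less_3_iff by auto
  then show "\<sigma> \<in> {id, transpose 1 2, cycle3}"
  proof cases
    case 1
    then have "\<sigma> = id"
      using \<sigma> by (intro permutes_lessThan_eqI) (auto simp: less_3_iff)
    then show ?thesis by simp
  next
    case 2
    then have "\<sigma> = transpose 1 2"
      using \<sigma> by (intro permutes_lessThan_eqI permutes_swap_id) (auto simp: less_3_iff)
    then show ?thesis by simp
  next
    case 3
    then have "\<sigma> = cycle3"
      using \<sigma> cycle3_permutes by (intro permutes_lessThan_eqI) (auto simp: less_3_iff)
    then show ?thesis by simp
  qed
next
  fix \<sigma> assume "\<sigma> \<in> {id, transpose 1 2, cycle3}"
  then show "\<sigma> \<in> unshuffles 2 3"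
    using cycle3_permutes by (auto simp: unshuffles_2_3_iff permutes_swap_id)
qed

lemma sign_cycle3: "sign cycle3 = 1"
  unfolding cycle3_def by (simp add: sign_compose permutation_swap_id sign_swap_id)

lemma koszul_id: "koszul ds id = 1"
  unfolding koszul_def by (rule prod.neutral) auto

lemma koszul_transpose_0_1: "koszul [a, b] (transpose 0 1) = (-1) ^ (b * a)"
proof -
  have "{(p, q). p < q \<and> q < length [a, b] \<and> transpose 0 1 q < transpose (0::nat) 1 p} = {(0, 1)}"
    by (auto simp: transpose_def less_Suc_eq)
  then show ?thesis by (simp add: koszul_def)
qed

lemma koszul_transpose_1_2: "koszul [a, b, c] (transpose 1 2) = (-1) ^ (c * b)"
proof -
  have "{(p, q). p < q \<and> q < length [a, b, c] \<and> transpose 1 2 q < transpose (1::nat) 2 p}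
    = {(1, 2)}"
    by (auto simp: transpose_def less_Suc_eq)
  then show ?thesis by (simp add: koszul_def)
qed

lemma koszul_cycle3: "koszul [a, b, c] cycle3 = (-1) ^ (b * a) * (-1) ^ (c * a)"
proof -
  have "{(p, q). p < q \<and> q < length [a, b, c] \<and> cycle3 q < cycle3 p} = {(0, 2), (1, 2)}"
    by (auto simp: less_Suc_eq)
  then show ?thesis by (simp add: koszul_def)
qed

lemma permute_list_by_id: "permute_list_by id xs = xs"
  by (simp add: permute_list_by_def map_nth)

lemma permute_list_by_transpose_0_1: "permute_list_by (transpose 0 1) [x, y] = [y, x]"
  by (simp add: permute_list_by_def upt_rec)

lemma permute_list_by_transpose_1_2: "permute_list_by (transpose 1 2) [x, y, z] = [x, z, y]"
  by (simp add: permute_list_by_def upt_rec numeral_2_eq_2)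

lemma permute_list_by_cycle3: "permute_list_by cycle3 [x, y, z] = [y, z, x]"
  by (simp add: permute_list_by_def upt_rec cycle3_def numeral_2_eq_2)

lemma pm_one [simp]: "pm 1 x = x" and pm_minus_one [simp]: "pm (-1) x = - x"
  by (simp_all add: pm_def)

lemma pm_zero [simp]: "pm s 0 = 0"
  by (simp add: pm_def)

lemma length_permute_list_by [simp]: "length (permute_list_by \<sigma> xs) = length xs"
  by (simp add: permute_list_by_def)

lemma id_eq_transpose_iff: "id = transpose a b \<longleftrightarrow> a = b"
  using transpose_eq_id_iff by metis

(* One_nat_def is a simp rule, so the lemmas above that mention the numeral 1 are used in
   their [simplified] form. *)
lemma jacobiator_unary:
  assumes "1 \<le> n"
  shows "jacobiator n l [x] [a] = l 1 [l 1 [x]]"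
proof -
  have size: "length [x] = 1" "{i. 1 \<le> i \<and> i \<le> 1 \<and> i \<le> n + 1 \<and> 1 + 1 - i \<le> n + 1} = {1::nat}"
    using assms by auto
  show ?thesis
    unfolding jacobiator_def Let_def size
    by (simp add: unshuffles_1_1[simplified] koszul_id permute_list_by_id)
qed

lemma jacobiator_binary:
  assumes "1 \<le> n"
  shows "jacobiator n l [x, y] [a, b]
    = - l 2 [l 1 [x], y] + pm ((-1) ^ (b * a)) (l 2 [l 1 [y], x]) + l 1 [l 2 [x, y]]"
proof -
  have size: "length [x, y] = 2" "{i. 1 \<le> i \<and> i \<le> 2 \<and> i \<le> n + 1 \<and> 2 + 1 - i \<le> n + 1} = {1::nat, 2}"
    using assms by auto
  show ?thesis
    unfolding jacobiator_def Let_def size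
    by (simp add: unshuffles_1_2[simplified] unshuffles_2_2 id_eq_transpose_iff koszul_id
        koszul_transpose_0_1[simplified] permute_list_by_id
        permute_list_by_transpose_0_1[simplified]
        sign_swap_id)
qed

lemma jacobiator_ternary:
  assumes "2 \<le> n" "\<And>xs. l 3 xs = 0" "l 1 [0] = 0"
  shows "jacobiator n l [x, y, z] [a, b, c] = l 2 [l 2 [x, y], z]
    + pm (- ((-1) ^ (c * b))) (l 2 [l 2 [x, z], y])
    + pm ((-1) ^ (b * a) * (-1) ^ (c * a)) (l 2 [l 2 [y, z], x])"
proof -
  have size: "length [x, y, z] = 3"
    "{i. 1 \<le> i \<and> i \<le> 3 \<and> i \<le> n + 1 \<and> 3 + 1 - i \<le> n + 1} = {1::nat, 2, 3}"
    using assms by auto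
  have "cycle3 0 \<noteq> id 0" "cycle3 2 \<noteq> transpose 1 2 2"
    by simp_all
  then have "id \<noteq> cycle3" "transpose 1 2 \<noteq> cycle3"
    by metis+
  then show ?thesis
    using assms(3) unfolding jacobiator_def Let_def size
    by (simp add: unshuffles_2_3[simplified] id_eq_transpose_iff koszul_id
        koszul_transpose_1_2[simplified] koszul_cycle3 sign_swap_id sign_cycle3 permute_list_by_id
        permute_list_by_transpose_1_2[simplified]
        permute_list_by_cycle3 assms(2))
qed

lemma set_permute_list_by:
  assumes "\<sigma> permutes {..<length xs}"
  shows "set (permute_list_by \<sigma> xs) \<subseteq> set xs"
proof -
  have "\<sigma> p < length xs" if "p < length xs" for p
    using permutes_in_image[OF assms, of p] that by simp
  then show ?thesis
    unfolding permute_list_by_def by auto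
qed

lemma jacobiator_long:
  assumes "4 \<le> length xs"
    and "\<And>j ys. j \<noteq> 1 \<Longrightarrow> j \<noteq> 2 \<Longrightarrow> l j ys = 0" "l 1 [0] = 0" "\<And>z. z \<in> set xs \<Longrightarrow> l 2 [0, z] = 0"
  shows "jacobiator n l xs ds = 0"
proof -
  have vanish: "l (length xs + 1 - i) (l i (take i ys) # drop i ys) = 0"
    if "i \<le> length xs" "ys = permute_list_by \<sigma> xs" "\<sigma> \<in> unshuffles i (length xs)" for i \<sigma> ys
  proof -
    have "i + 2 \<le> length xs \<or> i = length xs - 1 \<or> i = length xs"
      using that(1) by linarith
    then consider "i + 2 \<le> length xs" | "i = length xs - 1" | "i = length xs"
      by argo
    then show ?thesis
    proof cases
      case 1
      then show ?thesis by (intro assms(2)) auto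
    next
      case 2
      have "\<sigma> permutes {..<length xs}"
        using that(3) by (simp add: unshuffles_def)
      then have "set (drop i ys) \<subseteq> set xs"
        using that(2) set_permute_list_by by (intro order.trans[OF set_drop_subset]) simp
      moreover have drop: "drop i ys = [ys ! i]"
        using 2 assms(1) that(2) Cons_nth_drop_Suc[of i ys] by simp
      ultimately have "l 2 [0, ys ! i] = 0"
        by (simp add: assms(4))
      moreover have "l i (take i ys) = 0" "length xs + 1 - i = 2"
        using 2 assms(1) by (auto intro: assms(2))
      ultimately show ?thesis
        by (simp only: drop)
    next
      case 3
      then have "l i (take i ys) = 0"
        using assms(1) by (intro assms(2)) auto
      then show ?thesis
        using 3 assms(3) that(2) by simp
    qed
  qed
  show ?thesis
    unfolding jacobiator_def Let_def
    by (intro sum.neutral ballI) (simp only: mem_Collect_eq vanish pm_zero)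
qed

section \<open>The bracket on \<open>D\<^sub>\<pi>(E) \<oplus> End\<^sup>-\<^sup>1(E) \<oplus> End\<^sup>-\<^sup>2(E)\<close>\<close>

lemma ends_exhaust:
  obtains X d0 d1 d2 ta tb t where "x = ((X, d0, d1, d2), (ta, tb), t)"
  by (metis prod.collapse)

definition homogeneous :: "nat \<Rightarrow> ('r::zero, 'e0::zero, 'e1::zero, 'e2::zero) ends \<Rightarrow> bool" where
  "homogeneous n x \<longleftrightarrow>
    (n \<noteq> 0 \<longrightarrow> fst x = 0) \<and> (n \<noteq> 1 \<longrightarrow> fst (snd x) = 0) \<and> (n \<noteq> 2 \<longrightarrow> snd (snd x) = 0)"

lemma homogeneous_iff:
  "homogeneous n ((X, d0, d1, d2), (ta, tb), t) \<longleftrightarrow>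
    (n \<noteq> 0 \<longrightarrow> X = 0 \<and> d0 = 0 \<and> d1 = 0 \<and> d2 = 0) \<and> (n \<noteq> 1 \<longrightarrow> ta = 0 \<and> tb = 0) \<and>
    (n \<noteq> 2 \<longrightarrow> t = 0)"
  by (simp add: homogeneous_def zero_prod_def)

lemma homogeneous_ge_3: "homogeneous n x \<Longrightarrow> 3 \<le> n \<Longrightarrow> x = 0"
  by (cases x rule: ends_exhaust) (simp add: homogeneous_iff zero_prod_def)

lemma homogeneous_add:
  fixes x y :: "('r::monoid_add, 'e0::monoid_add, 'e1::monoid_add, 'e2::monoid_add) ends"
  shows "homogeneous n x \<Longrightarrow> homogeneous n y \<Longrightarrow> homogeneous n (x + y)"
  by (simp add: homogeneous_def)

lemma degree_cases:
  fixes n :: nat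
  obtains "n = 0" | "n = 1" | "n = 2" | "3 \<le> n"
  by linarith

locale three_term_complex =
  fixes sm0 :: "'r::{comm_ring_1,real_algebra_1} \<Rightarrow> 'e0::ab_group_add \<Rightarrow> 'e0"
    and sm1 :: "'r \<Rightarrow> 'e1::ab_group_add \<Rightarrow> 'e1"
    and sm2 :: "'r \<Rightarrow> 'e2::ab_group_add \<Rightarrow> 'e2"
    and p1 :: "'e1 \<Rightarrow> 'e0" and p2 :: "'e2 \<Rightarrow> 'e1"
  assumes complex: "complex3 sm0 sm1 sm2 p1 p2"
begin

abbreviation G where "G \<equiv> GE sm0 sm1 sm2 p1 p2"
abbreviation sm where "sm \<equiv> smE sm0 sm1 sm2"
abbreviation d where "d \<equiv> dE p1 p2"
abbreviation l where "l \<equiv> lE p1 p2"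

sublocale M0: module sm0
  using complex by (simp add: complex3_def flip: is_module_iff_module)
sublocale M1: module sm1
  using complex by (simp add: complex3_def flip: is_module_iff_module)
sublocale M2: module sm2
  using complex by (simp add: complex3_def flip: is_module_iff_module)

lemma p1_module_hom: "module_hom sm1 sm0 p1" and p2_module_hom: "module_hom sm2 sm1 p2"
  and p1_p2 [simp]: "p1 (p2 e) = 0"
  using complex by (simp_all add: complex3_def)

lemma additive_p1: "additive p1" and additive_p2: "additive p2"
  using additive_if_module_hom p1_module_hom p2_module_hom by blast+

lemmas complex_simps = additive_simps[OF additive_p1] additive_simps[OF additive_p2]

definition is_section :: "('r, 'e0, 'e1, 'e2) ends \<Rightarrow> bool" where
  "is_section = (\<lambda>((X, d0, d1, d2), (ta, tb), t). (X, d0, d1, d2) \<in> Dpi sm0 sm1 sm2 p1 p2 \<and>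
     module_hom sm0 sm1 ta \<and> module_hom sm1 sm2 tb \<and> module_hom sm0 sm2 t)"

lemma section_additive:
  assumes "is_section ((X, d0, d1, d2), (ta, tb), t)"
  shows "additive X" "additive d0" "additive d1" "additive d2"
    and "additive ta" "additive tb" "additive t"
  using assms
  by (auto simp: is_section_def Dpi_def additive_if_vector_field additive_if_der_op
      additive_if_module_hom)

lemma section_commutes:
  assumes "is_section ((X, d0, d1, d2), (ta, tb), t)"
  shows "d0 (p1 e1) = p1 (d1 e1)" "d1 (p2 e2) = p2 (d2 e2)"
  using assms by (simp_all add: is_section_def Dpi_def)

lemmas section_simps =
  section_additive[THEN additive.add] section_additive[THEN additive.zero]
  section_additive[THEN additive.minus] section_additive[THEN additive.diff] section_commutes

lemma section_scale_simps:
  assumes "is_section ((X, d0, d1, d2), (ta, tb), t)"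
  shows "X (f * g) = f * X g + X f * g" "X (of_real c) = 0"
    "d0 (sm0 f e0) = sm0 f (d0 e0) + sm0 (X f) e0"
    "d1 (sm1 f e1) = sm1 f (d1 e1) + sm1 (X f) e1"
    "d2 (sm2 f e2) = sm2 f (d2 e2) + sm2 (X f) e2"
    "ta (sm0 f e0) = sm1 f (ta e0)" "tb (sm1 f e1) = sm2 f (tb e1)" "t (sm0 f e0) = sm2 f (t e0)"
  using assms
  by (auto simp: is_section_def Dpi_def vector_field_mult vector_field_of_real der_op_scale_simp
      module_hom_scale_simp)

lemma section_cases:
  assumes "is_section x"
  obtains X d0 d1 d2 ta tb t
  where "x = ((X, d0, d1, d2), (ta, tb), t)" "is_section ((X, d0, d1, d2), (ta, tb), t)"
  using assms by (cases x rule: ends_exhaust) simp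

lemma zero_in_Dpi: "0 \<in> Dpi sm0 sm1 sm2 p1 p2"
  by (simp add: Dpi_def zero_prod_def vector_field_zero der_op_if_module_hom module_hom_zero
      M0.module_axioms M1.module_axioms M2.module_axioms complex_simps)

lemma is_section_zero: "is_section 0"
  using zero_in_Dpi
  by (simp add: is_section_def zero_prod_def module_hom_zero M1.module_axioms M2.module_axioms)

lemma GE_eq: "G n = {x. is_section x \<and> homogeneous n x}"
  using is_section_zero zero_in_Dpi
  by (auto simp: GE_def is_section_def homogeneous_def zero_prod_def module_hom_zero
      M1.module_axioms M2.module_axioms)

lemma Dpi_add:
  assumes "(X, d0, d1, d2) \<in> Dpi sm0 sm1 sm2 p1 p2" "(Y, e0, e1, e2) \<in> Dpi sm0 sm1 sm2 p1 p2"
  shows "(X + Y, d0 + e0, d1 + e1, d2 + e2) \<in> Dpi sm0 sm1 sm2 p1 p2"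
  using assms
  by (auto simp: Dpi_def vector_field_add der_op_add M0.module_axioms M1.module_axioms
      M2.module_axioms complex_simps)

lemma is_section_add:
  assumes "is_section x" "is_section y"
  shows "is_section (x + y)"
  using assms
  by (cases x rule: ends_exhaust, cases y rule: ends_exhaust)
    (simp add: is_section_def Dpi_add module_hom_plus M1.module_axioms M2.module_axioms)

lemma is_section_smE:
  assumes "is_section x"
  shows "is_section (sm f x)"
  using assms
  by (cases x rule: ends_exhaust)
    (auto simp: smE_def is_section_def Dpi_def vector_field_scale der_op_scale module_hom_scale
      M0.module_axioms M1.module_axioms M2.module_axioms
      module_hom_scale_simp[OF p1_module_hom] module_hom_scale_simp[OF p2_module_hom])

lemma is_section_dE:
  assumes "is_section x"
  shows "is_section (d x)"
proof -
  obtain X d0 d1 d2 ta tb t where x: "x = ((X, d0, d1, d2), (ta, tb), t)"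
    and sx: "is_section ((X, d0, d1, d2), (ta, tb), t)"
    using assms by (rule section_cases)
  then have ta: "module_hom sm0 sm1 ta" and tb: "module_hom sm1 sm2 tb"
    and t: "module_hom sm0 sm2 t"
    by (simp_all add: is_section_def)
  have "module_hom sm0 sm0 (\<lambda>e. p1 (ta e))" "module_hom sm1 sm1 (\<lambda>e. ta (p1 e) + p2 (tb e))"
    "module_hom sm2 sm2 (\<lambda>e. tb (p2 e))"
    by (intro module_hom_comp[OF ta p1_module_hom] module_hom_comp[OF tb p2_module_hom]
        module_hom_add M1.module_axioms module_hom_comp[OF p1_module_hom ta]
        module_hom_comp[OF p2_module_hom tb])+
  moreover have "module_hom sm0 sm1 (\<lambda>e. p2 (t e))" "module_hom sm1 sm2 (\<lambda>e. - t (p1 e))"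
    by (intro module_hom_comp[OF t p2_module_hom] module_hom_uminus M2.module_axioms
        module_hom_comp[OF p1_module_hom t])+
  ultimately show ?thesis
    by (simp add: x dE_def is_section_def Dpi_def vector_field_zero der_op_if_module_hom
        module_hom_zero M0.module_axioms M1.module_axioms M2.module_axioms section_simps[OF sx]
        complex_simps)
qed

lemma is_section_bracketE:
  assumes "is_section x" "is_section y"
  shows "is_section (bracketE x y)"
proof -
  obtain X d0 d1 d2 ta tb t where x: "x = ((X, d0, d1, d2), (ta, tb), t)"
    by (rule ends_exhaust)
  obtain Y e0 e1 e2 ta' tb' t' where y: "y = ((Y, e0, e1, e2), (ta', tb'), t')"
    by (rule ends_exhaust)
  have X: "is_vector_field X" "is_der_op sm0 X d0" "is_der_op sm1 X d1" "is_der_op sm2 X d2"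
    and \<theta>: "module_hom sm0 sm1 ta" "module_hom sm1 sm2 tb" "module_hom sm0 sm2 t"
    and X_\<pi>: "\<And>e. d0 (p1 e) = p1 (d1 e)" "\<And>e. d1 (p2 e) = p2 (d2 e)"
    using assms(1) by (simp_all add: x is_section_def Dpi_def)
  have Y: "is_vector_field Y" "is_der_op sm0 Y e0" "is_der_op sm1 Y e1" "is_der_op sm2 Y e2"
    and \<theta>': "module_hom sm0 sm1 ta'" "module_hom sm1 sm2 tb'" "module_hom sm0 sm2 t'"
    and Y_\<pi>: "\<And>e. e0 (p1 e) = p1 (e1 e)" "\<And>e. e1 (p2 e) = p2 (e2 e)"
    using assms(2) by (simp_all add: y is_section_def Dpi_def)
  have "is_vector_field (\<lambda>f. X (Y f) - Y (X f))"
    by (rule vector_field_commutator[OF X(1) Y(1)])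
  moreover have "is_der_op sm0 (\<lambda>f. X (Y f) - Y (X f)) (\<lambda>e. d0 (e0 e) - e0 (d0 e))"
    "is_der_op sm1 (\<lambda>f. X (Y f) - Y (X f)) (\<lambda>e. d1 (e1 e) - e1 (d1 e))"
    "is_der_op sm2 (\<lambda>f. X (Y f) - Y (X f)) (\<lambda>e. d2 (e2 e) - e2 (d2 e))"
    by (intro der_op_commutator X Y M0.module_axioms M1.module_axioms M2.module_axioms)+
  moreover have "module_hom sm0 sm1 (\<lambda>e. (d1 (ta' e) - ta' (d0 e)) - (e1 (ta e) - ta (e0 e)))"
    using module_hom_der_op_commutator[OF M1.module_axioms \<theta>'(1) X(2,3)]
      module_hom_der_op_commutator[OF M1.module_axioms \<theta>(1) Y(2,3)]
    by (rule module_hom_diff[OF M1.module_axioms])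
  moreover have "module_hom sm1 sm2 (\<lambda>e. (d2 (tb' e) - tb' (d1 e)) - (e2 (tb e) - tb (e1 e)))"
    using module_hom_der_op_commutator[OF M2.module_axioms \<theta>'(2) X(3,4)]
      module_hom_der_op_commutator[OF M2.module_axioms \<theta>(2) Y(3,4)]
    by (rule module_hom_diff[OF M2.module_axioms])
  moreover have "module_hom sm0 sm2
      (\<lambda>e. (d2 (t' e) - t' (d0 e)) - (e2 (t e) - t (e0 e)) + (tb (ta' e) + tb' (ta e)))"
    using module_hom_diff[OF M2.module_axioms
        module_hom_der_op_commutator[OF M2.module_axioms \<theta>'(3) X(2,4)]
        module_hom_der_op_commutator[OF M2.module_axioms \<theta>(3) Y(2,4)]]
      module_hom_add[OF M2.module_axioms
        module_hom_comp[OF \<theta>'(1) \<theta>(2)] module_hom_comp[OF \<theta>(1) \<theta>'(2)]]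
    by (rule module_hom_add[OF M2.module_axioms])
  ultimately show ?thesis
    by (simp add: x y bracketE_def is_section_def Dpi_def X_\<pi> Y_\<pi> complex_simps)
qed

sublocale ME: module sm
  unfolding module_def
proof (intro conjI allI)
  fix f g :: 'r and x y :: "('r, 'e0, 'e1, 'e2) ends"
  show "sm f (x + y) = sm f x + sm f y"
    "sm (f + g) x = sm f x + sm g x"
    "sm f (sm g x) = sm (f * g) x"
    "sm 1 x = x"
    by (cases x rule: ends_exhaust, cases y rule: ends_exhaust;
        simp add: smE_def fun_eq_iff algebra_simps)+
qed

lemma additive_dE: "additive d"
  unfolding additive_def
  by (intro allI, case_tac x rule: ends_exhaust, case_tac y rule: ends_exhaust)
    (simp add: dE_def complex_simps fun_eq_iff algebra_simps)

lemma dE_zero [simp]: "d 0 = 0"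
  by (rule additive.zero[OF additive_dE])

lemma dE_smE: "d (sm f x) = sm f (d x)"
  by (cases x rule: ends_exhaust)
    (simp add: dE_def smE_def module_hom_scale_simp[OF p1_module_hom]
      module_hom_scale_simp[OF p2_module_hom] fun_eq_iff algebra_simps)

lemma bracketE_add_left:
  assumes "is_section x" "is_section y" "is_section z"
  shows "bracketE (x + y) z = bracketE x z + bracketE y z"
proof -
  obtain X d0 d1 d2 ta tb t where x: "x = ((X, d0, d1, d2), (ta, tb), t)"
    and sx: "is_section ((X, d0, d1, d2), (ta, tb), t)"
    using assms(1) by (rule section_cases)
  obtain Y e0 e1 e2 ta' tb' t' where y: "y = ((Y, e0, e1, e2), (ta', tb'), t')"
    and sy: "is_section ((Y, e0, e1, e2), (ta', tb'), t')"
    using assms(2) by (rule section_cases)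
  obtain Z f0 f1 f2 ta'' tb'' t'' where z: "z = ((Z, f0, f1, f2), (ta'', tb''), t'')"
    and sz: "is_section ((Z, f0, f1, f2), (ta'', tb''), t'')"
    using assms(3) by (rule section_cases)
  show ?thesis
    by (simp add: x y z bracketE_def section_simps[OF sx] section_simps[OF sy] section_simps[OF sz]
        fun_eq_iff algebra_simps)
qed

lemma bracketE_add_right:
  assumes "is_section x" "is_section y" "is_section z"
  shows "bracketE x (y + z) = bracketE x y + bracketE x z"
proof -
  obtain X d0 d1 d2 ta tb t where x: "x = ((X, d0, d1, d2), (ta, tb), t)"
    and sx: "is_section ((X, d0, d1, d2), (ta, tb), t)"
    using assms(1) by (rule section_cases)
  obtain Y e0 e1 e2 ta' tb' t' where y: "y = ((Y, e0, e1, e2), (ta', tb'), t')"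
    and sy: "is_section ((Y, e0, e1, e2), (ta', tb'), t')"
    using assms(2) by (rule section_cases)
  obtain Z f0 f1 f2 ta'' tb'' t'' where z: "z = ((Z, f0, f1, f2), (ta'', tb''), t'')"
    and sz: "is_section ((Z, f0, f1, f2), (ta'', tb''), t'')"
    using assms(3) by (rule section_cases)
  show ?thesis
    by (simp add: x y z bracketE_def section_simps[OF sx] section_simps[OF sy] section_simps[OF sz]
        fun_eq_iff algebra_simps)
qed

lemma bracketE_smE_right:
  assumes "is_section x" "is_section y"
  shows "bracketE x (sm f y)
    = sm f (bracketE x y) + sm (anchorE x f) y"
proof -
  obtain X d0 d1 d2 ta tb t where x: "x = ((X, d0, d1, d2), (ta, tb), t)"
    and sx: "is_section ((X, d0, d1, d2), (ta, tb), t)"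
    using assms(1) by (rule section_cases)
  obtain Y e0 e1 e2 ta' tb' t' where y: "y = ((Y, e0, e1, e2), (ta', tb'), t')"
    and sy: "is_section ((Y, e0, e1, e2), (ta', tb'), t')"
    using assms(2) by (rule section_cases)
  show ?thesis
    by (simp add: x y bracketE_def smE_def anchorE_def section_simps[OF sx] section_simps[OF sy]
        section_scale_simps[OF sx] section_scale_simps[OF sy] fun_eq_iff algebra_simps)
qed

lemma bracketE_smE_left:
  assumes "is_section x" "is_section y"
  shows "bracketE (sm f x) y
    = sm f (bracketE x y) - sm (anchorE y f) x"
proof -
  obtain X d0 d1 d2 ta tb t where x: "x = ((X, d0, d1, d2), (ta, tb), t)"
    and sx: "is_section ((X, d0, d1, d2), (ta, tb), t)"
    using assms(1) by (rule section_cases)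
  obtain Y e0 e1 e2 ta' tb' t' where y: "y = ((Y, e0, e1, e2), (ta', tb'), t')"
    and sy: "is_section ((Y, e0, e1, e2), (ta', tb'), t')"
    using assms(2) by (rule section_cases)
  show ?thesis
    by (simp add: x y bracketE_def smE_def anchorE_def section_simps[OF sx] section_simps[OF sy]
        section_scale_simps[OF sx] section_scale_simps[OF sy] fun_eq_iff algebra_simps)
qed

lemma dE_dE:
  assumes "is_section x"
  shows "d (d x) = 0"
proof -
  obtain X d0 d1 d2 ta tb t where x: "x = ((X, d0, d1, d2), (ta, tb), t)"
    and sx: "is_section ((X, d0, d1, d2), (ta, tb), t)"
    using assms(1) by (rule section_cases)
  show ?thesis
    by (simp add: x dE_def section_simps[OF sx] complex_simps zero_prod_def fun_eq_iff)
qed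

lemma dE_degree_0: "homogeneous 0 x \<Longrightarrow> d x = 0"
  by (cases x rule: ends_exhaust)
    (simp add: dE_def homogeneous_iff complex_simps zero_prod_def fun_eq_iff)

lemma homogeneous_dE: "homogeneous n x \<Longrightarrow> homogeneous (n - 1) (d x)"
  by (cases x rule: ends_exhaust, cases rule: degree_cases[of n])
    (simp_all add: dE_def homogeneous_iff complex_simps fun_eq_iff)

lemma homogeneous_bracketE:
  assumes "is_section x" "is_section y" "homogeneous a x" "homogeneous b y"
  shows "homogeneous (a + b) (bracketE x y)"
proof -
  obtain X d0 d1 d2 ta tb t where x: "x = ((X, d0, d1, d2), (ta, tb), t)"
    and sx: "is_section ((X, d0, d1, d2), (ta, tb), t)"
    using assms(1) by (rule section_cases)
  obtain Y e0 e1 e2 ta' tb' t' where y: "y = ((Y, e0, e1, e2), (ta', tb'), t')"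
    and sy: "is_section ((Y, e0, e1, e2), (ta', tb'), t')"
    using assms(2) by (rule section_cases)
  show ?thesis
    using assms(3,4) unfolding x y
    by (cases rule: degree_cases[of a]; cases rule: degree_cases[of b])
      (simp_all add: bracketE_def homogeneous_iff section_simps[OF sx] section_simps[OF sy]
        fun_eq_iff)
qed

lemma bracketE_skew:
  assumes "is_section x" "is_section y" "homogeneous a x" "homogeneous b y"
  shows "bracketE y x = pm (- ((-1) ^ (b * a))) (bracketE x y)"
proof -
  obtain X d0 d1 d2 ta tb t where x: "x = ((X, d0, d1, d2), (ta, tb), t)"
    and sx: "is_section ((X, d0, d1, d2), (ta, tb), t)"
    using assms(1) by (rule section_cases)
  obtain Y e0 e1 e2 ta' tb' t' where y: "y = ((Y, e0, e1, e2), (ta', tb'), t')"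
    and sy: "is_section ((Y, e0, e1, e2), (ta', tb'), t')"
    using assms(2) by (rule section_cases)
  show ?thesis
    using assms(3,4) unfolding x y
    by (cases rule: degree_cases[of a]; cases rule: degree_cases[of b])
      (simp_all add: bracketE_def homogeneous_iff section_simps[OF sx] section_simps[OF sy]
        pm_def zero_prod_def fun_eq_iff algebra_simps)
qed

lemma dE_bracketE:
  assumes "is_section x" "is_section y" "homogeneous a x" "homogeneous b y"
  shows "d (bracketE x y)
    = bracketE (d x) y - pm ((-1) ^ (b * a)) (bracketE (d y) x)"
proof -
  obtain X d0 d1 d2 ta tb t where x: "x = ((X, d0, d1, d2), (ta, tb), t)"
    and sx: "is_section ((X, d0, d1, d2), (ta, tb), t)"
    using assms(1) by (rule section_cases)
  obtain Y e0 e1 e2 ta' tb' t' where y: "y = ((Y, e0, e1, e2), (ta', tb'), t')"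
    and sy: "is_section ((Y, e0, e1, e2), (ta', tb'), t')"
    using assms(2) by (rule section_cases)
  show ?thesis
    using assms(3,4) unfolding x y
    by (cases rule: degree_cases[of a]; cases rule: degree_cases[of b])
      (simp_all add: bracketE_def dE_def homogeneous_iff section_simps[OF sx] section_simps[OF sy]
        complex_simps pm_def zero_prod_def fun_eq_iff algebra_simps)
qed

lemma bracketE_jacobi:
  assumes "is_section x" "is_section y" "is_section z"
    and "homogeneous a x" "homogeneous b y" "homogeneous c z"
  shows "bracketE (bracketE x y) z + pm (- ((-1) ^ (c * b))) (bracketE (bracketE x z) y)
    + pm ((-1) ^ (b * a) * (-1) ^ (c * a)) (bracketE (bracketE y z) x) = 0"
proof -
  obtain X d0 d1 d2 ta tb t where x: "x = ((X, d0, d1, d2), (ta, tb), t)"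
    and sx: "is_section ((X, d0, d1, d2), (ta, tb), t)"
    using assms(1) by (rule section_cases)
  obtain Y e0 e1 e2 ta' tb' t' where y: "y = ((Y, e0, e1, e2), (ta', tb'), t')"
    and sy: "is_section ((Y, e0, e1, e2), (ta', tb'), t')"
    using assms(2) by (rule section_cases)
  obtain Z f0 f1 f2 ta'' tb'' t'' where z: "z = ((Z, f0, f1, f2), (ta'', tb''), t'')"
    and sz: "is_section ((Z, f0, f1, f2), (ta'', tb''), t'')"
    using assms(3) by (rule section_cases)
  show ?thesis
    using assms(4-6) unfolding x y z
    by (cases rule: degree_cases[of a]; cases rule: degree_cases[of b];
        cases rule: degree_cases[of c])
      (simp_all add: bracketE_def homogeneous_iff section_simps[OF sx] section_simps[OF sy]
        section_simps[OF sz] pm_def zero_prod_def fun_eq_iff algebra_simps)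
qed

end

section \<open>The split Lie 3-algebroid\<close>

lemma lE_1 [simp]: "lE p1 p2 1 xs = dE p1 p2 (xs ! 0)" "lE p1 p2 (Suc 0) xs = dE p1 p2 (xs ! 0)"
  and lE_2 [simp]: "lE p1 p2 2 xs = bracketE (xs ! 0) (xs ! 1)"
  and lE_other: "i \<noteq> 1 \<Longrightarrow> i \<noteq> 2 \<Longrightarrow> lE p1 p2 i xs = 0"
  by (simp_all add: lE_def)

lemma less_2_cases: "p < 2 \<Longrightarrow> p = 0 \<or> p = 1" for p :: nat
  by auto

lemma arity_cases:
  assumes "length xs = i"
  obtains (unary) x where "i = 1" "xs = [x]"
    | (binary) x y where "i = 2" "xs = [x, y]"
    | (other) "i \<noteq> 1" "i \<noteq> 2"
  using assms by (metis One_nat_def Suc_1 length_0_conv length_Suc_conv)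

context three_term_complex
begin

lemma homogeneous_smE: "homogeneous n x \<Longrightarrow> homogeneous n (sm f x)"
  by (cases x rule: ends_exhaust) (simp add: homogeneous_iff smE_def fun_eq_iff zero_fun_def)

lemma GE_subspace:
  "0 \<in> G n"
  "x \<in> G n \<Longrightarrow> y \<in> G n \<Longrightarrow> x + y \<in> G n"
  "x \<in> G n \<Longrightarrow> sm f x \<in> G n"
  by (simp_all add: GE_eq is_section_zero is_section_add is_section_smE homogeneous_add
      homogeneous_smE) (simp add: homogeneous_def)

lemma GE_ge_3: "3 \<le> n \<Longrightarrow> G n = {0}"
  using homogeneous_ge_3 GE_subspace(1) by (auto simp: GE_eq)

lemma GE_direct_sum:
  assumes "\<forall>i<3. xs i \<in> G i" "(\<Sum>i<3. xs i) = 0"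
  shows "\<forall>i<3. xs i = 0"
proof -
  have "homogeneous 0 (xs 0)" "homogeneous 1 (xs 1)" "homogeneous 2 (xs 2)"
    using assms(1) by (simp_all add: GE_eq)
  moreover have "xs 0 + xs 1 + xs 2 = 0"
    using assms(2) by (simp add: numeral_3_eq_3 numeral_2_eq_2)
  ultimately have "xs 0 = 0 \<and> xs 1 = 0 \<and> xs 2 = 0"
    by (cases "xs 0" rule: ends_exhaust, cases "xs 1" rule: ends_exhaust,
        cases "xs 2" rule: ends_exhaust) (simp add: homogeneous_iff zero_prod_def)
  then show ?thesis
    by (simp add: less_3_iff)
qed

lemma sections_GE: "sections 3 G = {x. is_section x}"
proof (intro equalityI subsetI)
  fix x assume "x \<in> sections 3 G"
  then obtain xs where "x = (\<Sum>i<3. xs i)" and "\<forall>i<3. xs i \<in> G i"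
    by (auto simp: sections_def)
  then show "x \<in> {x. is_section x}"
    by (simp add: numeral_3_eq_3 GE_eq is_section_add)
next
  fix x assume "x \<in> {x. is_section x}"
  then obtain X d0 d1 d2 ta tb t where x: "x = ((X, d0, d1, d2), (ta, tb), t)"
    and sx: "is_section ((X, d0, d1, d2), (ta, tb), t)"
    by (auto elim: section_cases)
  define xs where "xs i = (if i = 0 then ((X, d0, d1, d2), 0, 0)
    else if i = 1 then (0, (ta, tb), 0) else (0, 0, t))" for i :: nat
  have "\<forall>i<3. xs i \<in> G i"
    using sx zero_in_Dpi
    by (auto simp: xs_def GE_def less_3_iff is_section_def zero_prod_def)
  moreover have "x = (\<Sum>i<3. xs i)"
    by (simp add: x xs_def numeral_3_eq_3)
  ultimately show "x \<in> sections 3 G"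
    unfolding sections_def by blast
qed

lemma anchorE_vector_field: "is_section x \<Longrightarrow> is_vector_field (anchorE x)"
  by (cases x rule: ends_exhaust) (simp add: anchorE_def is_section_def Dpi_def)

lemma bracketE_zero_left: "is_section y \<Longrightarrow> bracketE 0 y = 0"
  using bracketE_add_left[OF is_section_zero is_section_zero] by simp

lemma bracketE_scaleR_left:
  "is_section x \<Longrightarrow> is_section y \<Longrightarrow>
    bracketE (sm (of_real c) x) y = sm (of_real c) (bracketE x y)"
  by (simp add: bracketE_smE_left vector_field_of_real anchorE_vector_field)

lemma bracketE_scaleR_right:
  "is_section x \<Longrightarrow> is_section y \<Longrightarrow>
    bracketE x (sm (of_real c) y) = sm (of_real c) (bracketE x y)"
  by (simp add: bracketE_smE_right vector_field_of_real anchorE_vector_field)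

lemma is_section_lE:
  assumes "length xs = i" "set xs \<subseteq> Collect is_section"
  shows "is_section (l i xs)"
  using assms(1) by (cases rule: arity_cases)
    (use assms(2) in \<open>simp_all add: is_section_dE is_section_bracketE lE_other is_section_zero\<close>)

lemma lE_add:
  assumes "length xs = i" "set xs \<subseteq> Collect is_section" "p < i" "is_section y"
  shows "l i (xs[p := xs ! p + y]) = l i xs + l i (xs[p := y])"
  using assms(1)
proof (cases rule: arity_cases)
  case unary
  then show ?thesis using assms(3) by (simp add: additive.add[OF additive_dE])
next
  case binary
  then show ?thesis using assms(2-4) less_2_cases[of p]
    by (auto simp: bracketE_add_left bracketE_add_right)
qed (simp add: lE_other)

lemma lE_scaleR:
  assumes "length xs = i" "set xs \<subseteq> Collect is_section" "p < i"
  shows "l i (xs[p := sm (of_real c) (xs ! p)])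
    = sm (of_real c) (l i xs)"
  using assms(1)
proof (cases rule: arity_cases)
  case unary
  then show ?thesis using assms(3) by (simp add: dE_smE)
next
  case binary
  then show ?thesis using assms(2,3) less_2_cases[of p]
    by (auto simp: bracketE_scaleR_left bracketE_scaleR_right)
qed (simp add: lE_other)

lemma lE_smE:
  assumes "length xs = i" "i \<noteq> 2" "p < i"
  shows "l i (xs[p := sm f (xs ! p)]) = sm f (l i xs)"
  using assms(1)
proof (cases rule: arity_cases)
  case unary
  then show ?thesis using assms(3) by (simp add: dE_smE)
qed (use assms(2) in \<open>simp_all add: lE_other\<close>)

lemma homog_GE_iff:
  "homog G xs ds \<longleftrightarrow>
    length ds = length xs \<and> (\<forall>j<length xs. is_section (xs ! j) \<and> homogeneous (ds ! j) (xs ! j))"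
  by (simp add: homog_def GE_eq)

lemma homog_GE_cases:
  assumes "homog G xs ds" "length xs = i"
  obtains (unary) x a where "i = 1" "xs = [x]" "ds = [a]" "is_section x" "homogeneous a x"
    | (binary) x y a b where "i = 2" "xs = [x, y]" "ds = [a, b]" "is_section x" "is_section y"
        "homogeneous a x" "homogeneous b y"
    | (other) "i \<noteq> 1" "i \<noteq> 2"
proof -
  have ds: "length ds = i"
    and hom: "\<And>j. j < i \<Longrightarrow> is_section (xs ! j) \<and> homogeneous (ds ! j) (xs ! j)"
    using assms by (auto simp: homog_GE_iff)
  from assms(2) show ?thesis
  proof (cases rule: arity_cases)
    case (unary x)
    with ds obtain a where "ds = [a]"
      by (auto simp: length_Suc_conv)
    with unary hom[of 0] show ?thesis using that(1) by simp
  next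
    case (binary x y)
    with ds obtain a b where "ds = [a, b]"
      by (auto simp: length_Suc_conv numeral_2_eq_2)
    with binary hom[of 0] hom[of 1] show ?thesis using that(2) by simp
  qed (use that(3) in blast)
qed

lemma lE_degree:
  assumes "homog G xs ds" "length xs = i"
  shows "if 2 \<le> sum_list ds + i \<and> sum_list ds + i - 2 < 3
    then l i xs \<in> G (sum_list ds + i - 2) else l i xs = 0"
  using assms
proof (cases rule: homog_GE_cases)
  case (unary x a)
  then show ?thesis
    using dE_degree_0[of x] homogeneous_dE[of a x] homogeneous_ge_3[of a x] is_section_dE[of x]
    by (cases "a = 0") (auto simp: GE_eq additive.zero[OF additive_dE])
next
  case (binary x y a b)
  then show ?thesis
    using homogeneous_bracketE[of x y a b] homogeneous_ge_3[of "a + b" "bracketE x y"]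
      is_section_bracketE[of x y]
    by (auto simp: GE_eq)
qed (simp add: lE_other GE_subspace(1))

lemma lE_skew:
  assumes "homog G xs ds" "length xs = i" "\<sigma> permutes {..<i}"
  shows "l i (permute_list_by \<sigma> xs) = pm (sign \<sigma> * koszul ds \<sigma>) (l i xs)"
  using assms(1,2)
proof (cases rule: homog_GE_cases)
  case unary
  then have "\<sigma> = id"
    using assms(3) permutes_lessThan_1 by blast
  then show ?thesis
    by (simp add: permute_list_by_id koszul_id pm_def)
next
  case (binary x y a b)
  then have "\<sigma> = id \<or> \<sigma> = transpose 0 1"
    using assms(3) by (simp add: permutes_lessThan_2)
  then show ?thesis
  proof
    assume "\<sigma> = id"
    then show ?thesis by (simp add: permute_list_by_id koszul_id pm_def)
  next
    assume \<sigma>: "\<sigma> = transpose 0 1"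
    show ?thesis
      unfolding \<sigma> binary permute_list_by_transpose_0_1 koszul_transpose_0_1
      using bracketE_skew[OF binary(4-7)] by (simp add: sign_swap_id pm_def)
  qed
qed (simp add: lE_other)

lemma jacobiator_lE:
  assumes "homog G xs ds" "1 \<le> length xs"
  shows "jacobiator 3 l xs ds = 0"
  using assms(1) refl
proof (cases rule: homog_GE_cases)
  case (unary x a)
  then show ?thesis by (simp add: jacobiator_unary dE_dE)
next
  case (binary x y a b)
  then show ?thesis by (simp add: jacobiator_binary dE_bracketE)
next
  case other
  then consider "length xs = 3" | "4 \<le> length xs"
    using assms(2) by linarith
  then show ?thesis
  proof cases
    case 1
    then obtain x y z a b c where xs: "xs = [x, y, z]" and ds: "ds = [a, b, c]"
      using assms(1) by (auto simp: homog_def length_Suc_conv numeral_3_eq_3)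
    have "is_section (xs ! j) \<and> homogeneous (ds ! j) (xs ! j)" if "j < 3" for j
      using assms(1) 1 that by (simp add: homog_GE_iff)
    from this[of 0] this[of 1] this[of 2] show ?thesis
      using bracketE_jacobi[of x y z a b c] by (simp add: xs ds jacobiator_ternary lE_other)
  next
    case 2
    have "set xs \<subseteq> Collect is_section"
      using assms(1) unfolding homog_GE_iff subset_iff mem_Collect_eq in_set_conv_nth by blast
    with 2 show ?thesis
      by (intro jacobiator_long) (auto simp: lE_other bracketE_zero_left)
  qed
qed

lemma anchorE_smE: "anchorE (sm g x) = (\<lambda>f. g * anchorE x f)"
  by (cases x rule: ends_exhaust) (simp add: smE_def anchorE_def)

lemma anchorE_add: "anchorE (x + y) = (\<lambda>f. anchorE x f + anchorE y f)"
  by (simp add: anchorE_def plus_fun_def)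

lemma GE_graded_module:
  "is_module sm \<and>
   (\<forall>i. 0 \<in> G i \<and>
     (\<forall>x\<in>G i. \<forall>y\<in>G i. x + y \<in> G i) \<and>
     (\<forall>f. \<forall>x\<in>G i. sm f x \<in> G i)) \<and>
   (\<forall>i\<ge>3. G i = {0}) \<and>
   (\<forall>xs. (\<forall>i<3. xs i \<in> G i) \<and> (\<Sum>i<3. xs i) = 0 \<longrightarrow> (\<forall>i<3. xs i = 0))"
  using ME.module_axioms GE_subspace GE_ge_3 GE_direct_sum by (simp add: is_module_iff_module)

lemma anchorE_bundle_map:
  "(\<forall>x\<in>G 0. is_vector_field (anchorE x)) \<and>
   (\<forall>x\<in>G 0. \<forall>y\<in>G 0. anchorE (x + y) = (\<lambda>f. anchorE x f + anchorE y f)) \<and>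
   (\<forall>g. \<forall>x\<in>G 0. anchorE (sm g x) = (\<lambda>f. g * anchorE x f))"
  by (simp add: GE_eq anchorE_vector_field anchorE_smE anchorE_add)

lemma lE_leibniz:
  "x \<in> G 0 \<Longrightarrow> is_section y \<Longrightarrow>
    l 2 [x, sm f y] = sm f (l 2 [x, y]) + sm (anchorE x f) y"
  by (simp add: GE_eq bracketE_smE_right)

lemma lE_bracket_axioms:
  "(\<forall>i\<in>{1..3 + 1}. \<forall>xs. length xs = i \<and> set xs \<subseteq> {x. is_section x} \<longrightarrow>
     is_section (l i xs) \<and>
     (\<forall>p<i. \<forall>y\<in>{x. is_section x}. l i (xs[p := xs ! p + y]) = l i xs + l i (xs[p := y])) \<and>
     (\<forall>p<i. \<forall>c. l i (xs[p := sm (of_real c) (xs ! p)])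
        = sm (of_real c) (l i xs)) \<and>
     (i \<noteq> 2 \<longrightarrow> (\<forall>p<i. \<forall>f. l i (xs[p := sm f (xs ! p)]) = sm f (l i xs)))) \<and>
   (\<forall>i\<in>{1..3 + 1}. \<forall>xs ds. homog G xs ds \<and> length xs = i \<longrightarrow>
     (if 2 \<le> sum_list ds + i \<and> sum_list ds + i - 2 < 3
      then l i xs \<in> G (sum_list ds + i - 2) else l i xs = 0)) \<and>
   (\<forall>i\<in>{1..3 + 1}. \<forall>xs ds \<sigma>. homog G xs ds \<and> length xs = i \<and> \<sigma> permutes {..<i} \<longrightarrow>
     l i (permute_list_by \<sigma> xs) = pm (sign \<sigma> * koszul ds \<sigma>) (l i xs)) \<and>
   (\<forall>xs ds. homog G xs ds \<and> length xs \<ge> 1 \<longrightarrow> jacobiator 3 l xs ds = 0) \<and>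
   (\<forall>x\<in>G 0. \<forall>y\<in>{x. is_section x}. \<forall>f.
     l 2 [x, sm f y] = sm f (l 2 [x, y]) + sm (anchorE x f) y)"
  using lE_degree lE_skew jacobiator_lE lE_leibniz
  by (intro conjI) (blast | simp add: is_section_lE lE_add lE_scaleR lE_smE)+

end

theorem theorem4p1:
  fixes sm0 :: "'r::{comm_ring_1,real_algebra_1} \<Rightarrow> 'e0::ab_group_add \<Rightarrow> 'e0"
    and sm1 :: "'r \<Rightarrow> 'e1::ab_group_add \<Rightarrow> 'e1"
    and sm2 :: "'r \<Rightarrow> 'e2::ab_group_add \<Rightarrow> 'e2"
    and p1 :: "'e1 \<Rightarrow> 'e0" and p2 :: "'e2 \<Rightarrow> 'e1"
  assumes "complex3 sm0 sm1 sm2 p1 p2"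
  shows "strict_lie_3_algebroid (smE sm0 sm1 sm2) (GE sm0 sm1 sm2 p1 p2) anchorE (lE p1 p2)"
proof -
  interpret three_term_complex sm0 sm1 sm2 p1 p2
    by (rule three_term_complex.intro[OF assms])
  show ?thesis
    unfolding strict_lie_3_algebroid_def split_lie_n_algebroid_def sections_GE
    using GE_graded_module anchorE_bundle_map lE_bracket_axioms
    by (intro conjI; (elim conjE)?; (assumption | simp add: lE_other))
qed

end
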